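(* Let $K$ be a field of characteristic $0$ and let $f\in K[[x_1,x_2]]$ be D-finite over $K(x_1,x_2)$, with non-zero annihilators $L_1\in K[x_1,x_2]\langle D_{x_1}\rangle$ and $L_2\in K[x_1,x_2]\langle D_{x_2}\rangle$ of orders at most $r_f$ and degrees at most $d_f$. Let $L=\sum_{i+j\le r_L}l_{i,j}(x_1,x_2)D_{x_1}^iD_{x_2}^j\in K[x_1,x_2]\langle D_{x_1},D_{x_2}\rangle$ be an operator of (total) order $r_L$ whose coefficients have total degree at most $d_L$, and let $g=L(f)$. Then there exist non-zero operators $A_1\in K[x_1,x_2]\langle D_{x_1}\rangle$ and $A_2\in K[x_1,x_2]\langle D_{x_2}\rangle$ with $A_1(g)=A_2(g)=0$, each of order $r_g\le r_f^2$ and degree $d_g\le (d_L+2d_f(r_f^2+r_L))\,r_f^2$.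
   Context: A series is D-finite over $K(x_1,x_2)$ if the $K(x_1,x_2)$-space spanned by all its partial derivatives is finite-dimensional. For an operator $\sum_{j=0}^r\ell_jD_{x_i}^j$ with polynomial coefficients and $\ell_r\ne0$, the order is $r$ and the degree is the maximal total degree of the coefficients $\ell_j$. *)

theory Defs
  imports "HOL-Computational_Algebra.Computational_Algebra"
begin

text \<open>Bivariate polynomials K[x1,x2] are rendered as 'a poly poly: the outer
variable is x2, the coefficients are polynomials in x1.
Bivariate power series K[[x1,x2]] are rendered as 'a fps fps: the outer
variable is x2, the coefficients are power series in x1.\<close>

type_synonym 'a bipoly = "'a poly poly"
type_synonym 'a bifps = "'a fps fps"

definition tdeg :: "'a::zero bipoly \<Rightarrow> nat" where
  "tdeg p = Max ({i + degree (coeff p i) | i. i \<le> degree p \<and> coeff p i \<noteq> 0} \<union> {0})"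

definition bi_of_poly :: "'a::comm_ring_1 bipoly \<Rightarrow> 'a bifps" where
  "bi_of_poly p = fps_of_poly (map_poly fps_of_poly p)"

definition Dx1 :: "'a::comm_ring_1 bifps \<Rightarrow> 'a bifps" where
  "Dx1 F = Abs_fps (\<lambda>n. fps_deriv (F $ n))"

definition Dx2 :: "'a::comm_ring_1 bifps \<Rightarrow> 'a bifps" where
  "Dx2 F = fps_deriv F"

text \<open>Operators in K[x1,x2]<D_xk> are given by their coefficient sequences
l :: nat \<Rightarrow> 'a bipoly (coefficient of D^j); order at most r means l j = 0 for j > r.\<close>
definition apply_op1 :: "(nat \<Rightarrow> 'a::comm_ring_1 bipoly) \<Rightarrow> nat \<Rightarrow> 'a bifps \<Rightarrow> 'a bifps" where
  "apply_op1 l r F = (\<Sum>j\<le>r. bi_of_poly (l j) * (Dx1 ^^ j) F)"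

definition apply_op2 :: "(nat \<Rightarrow> 'a::comm_ring_1 bipoly) \<Rightarrow> nat \<Rightarrow> 'a bifps \<Rightarrow> 'a bifps" where
  "apply_op2 l r F = (\<Sum>j\<le>r. bi_of_poly (l j) * (Dx2 ^^ j) F)"

definition ord_deg_bounded :: "(nat \<Rightarrow> 'a::zero bipoly) \<Rightarrow> nat \<Rightarrow> nat \<Rightarrow> bool" where
  "ord_deg_bounded l r d \<longleftrightarrow> (\<forall>j>r. l j = 0) \<and> (\<forall>j. tdeg (l j) \<le> d)"

definition nonzero_op :: "(nat \<Rightarrow> 'a::zero bipoly) \<Rightarrow> bool" where
  "nonzero_op l \<longleftrightarrow> (\<exists>j. l j \<noteq> 0)"

definition apply_op12 :: "(nat \<Rightarrow> nat \<Rightarrow> 'a::comm_ring_1 bipoly) \<Rightarrow> nat \<Rightarrow> 'a bifps \<Rightarrow> 'a bifps" where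
  "apply_op12 l r F = (\<Sum>(i,j)\<in>{(i,j). i + j \<le> r}. bi_of_poly (l i j) * (Dx1 ^^ i) ((Dx2 ^^ j) F))"

end

theory Submission
  imports Defs "Jordan_Normal_Form.Determinant"
begin

text \<open>
  Take relations of minimal order r1 in D_x1 and r2 in D_x2 for f, with leading coefficients
  p1 and p2. Since p * D (p^k * X) = k * D p * p^k * X + p^(k+1) * D X, every further derivative
  of a relation costs one factor p and d_f in degree, so (p1 p2)^(a+b) D_x1^a D_x2^b f is a
  combination of the m = r1 r2 series D_x1^i D_x2^j f (i < r1, j < r2) with coefficients of
  degree at most 2 d_f (a+b). Multiplying by P = (p1 p2)^(r_L+m) thus puts the m+1 series
  D^k g (k \<le> m) into a module with m generators and coefficients of degree at most
  d_L + 2 d_f (r_L+m). Cramer's rule yields a kernel vector of the coefficient matrix whose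
  entries are minors of size at most m, and it annihilates g because P is not a zero divisor.
\<close>

section \<open>Total degree\<close>

lemma tdeg_le_iff:
  "tdeg p \<le> T \<longleftrightarrow> (\<forall>i j. coeff (coeff p i) j \<noteq> 0 \<longrightarrow> i + j \<le> T)"
proof -
  let ?S = "{i + degree (coeff p i) | i. i \<le> degree p \<and> coeff p i \<noteq> 0}"
  have "finite ?S" by simp
  then have "tdeg p \<le> T \<longleftrightarrow> (\<forall>a\<in>?S \<union> {0}. a \<le> T)"
    unfolding tdeg_def by (subst Max_le_iff) auto
  also have "\<dots> \<longleftrightarrow> (\<forall>i. coeff p i \<noteq> 0 \<longrightarrow> i + degree (coeff p i) \<le> T)"
    by (fastforce dest: le_degree)
  also have "\<dots> \<longleftrightarrow> (\<forall>i j. coeff (coeff p i) j \<noteq> 0 \<longrightarrow> i + j \<le> T)"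
    by (metis add_le_cancel_left le_degree le_trans leading_coeff_0_iff coeff_0)
  finally show ?thesis .
qed

lemma tdeg_leI: "(\<And>i j. coeff (coeff p i) j \<noteq> 0 \<Longrightarrow> i + j \<le> T) \<Longrightarrow> tdeg p \<le> T"
  using tdeg_le_iff by blast

lemma tdeg_ge: "coeff (coeff p i) j \<noteq> 0 \<Longrightarrow> i + j \<le> tdeg p"
  using tdeg_le_iff[of p "tdeg p"] by blast

lemma tdeg_0 [simp]: "tdeg 0 = 0"
  by (simp add: tdeg_def)

lemma tdeg_of_nat [simp]: "tdeg (of_nat k :: 'a::comm_ring_1 bipoly) = 0"
  by (intro le_zero_eq[THEN iffD1] tdeg_leI) (auto simp: of_nat_poly coeff_pCons split: nat.splits)

lemma tdeg_1 [simp]: "tdeg (1 :: 'a::comm_ring_1 bipoly) = 0"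
  using tdeg_of_nat[of 1] by simp

lemma tdeg_uminus [simp]: "tdeg (- p) = tdeg (p :: 'a::comm_ring_1 bipoly)"
  by (simp add: tdeg_def)

lemma tdeg_add_le: "tdeg p \<le> T \<Longrightarrow> tdeg q \<le> T \<Longrightarrow> tdeg (p + q) \<le> T"
  unfolding tdeg_le_iff by (metis add.right_neutral coeff_add)

lemma tdeg_mult: "tdeg (p * q) \<le> tdeg p + tdeg (q :: 'a::comm_ring_1 bipoly)"
proof (rule tdeg_leI)
  fix n j assume "coeff (coeff (p * q) n) j \<noteq> 0"
  then have "(\<Sum>k\<le>n. coeff (coeff p k * coeff q (n - k)) j) \<noteq> 0"
    by (simp add: coeff_mult coeff_sum)
  then obtain k where k: "k \<le> n" "coeff (coeff p k * coeff q (n - k)) j \<noteq> 0"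
    by (rule sum.not_neutral_contains_not_neutral) auto
  then have "(\<Sum>l\<le>j. coeff (coeff p k) l * coeff (coeff q (n - k)) (j - l)) \<noteq> 0"
    by (simp add: coeff_mult)
  then obtain l where l: "l \<le> j" "coeff (coeff p k) l * coeff (coeff q (n - k)) (j - l) \<noteq> 0"
    by (rule sum.not_neutral_contains_not_neutral) auto
  then have "coeff (coeff p k) l \<noteq> 0" "coeff (coeff q (n - k)) (j - l) \<noteq> 0" by auto
  from tdeg_ge[OF this(1)] tdeg_ge[OF this(2)] k(1) l(1) show "n + j \<le> tdeg p + tdeg q"
    by linarith
qed

lemma tdeg_mult_le: "tdeg p \<le> A \<Longrightarrow> tdeg q \<le> B \<Longrightarrow> tdeg (p * q) \<le> A + B"
  for p q :: "'a::comm_ring_1 bipoly"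
  using tdeg_mult[of p q] by linarith

lemma tdeg_sum_le: "(\<And>i. i \<in> A \<Longrightarrow> tdeg (f i) \<le> T) \<Longrightarrow> tdeg (sum f A) \<le> T"
  for f :: "'b \<Rightarrow> 'a::comm_ring_1 bipoly"
  by (induction A rule: infinite_finite_induct) (simp_all add: tdeg_add_le)

lemma tdeg_prod_le: "tdeg (prod f A) \<le> (\<Sum>i\<in>A. tdeg (f i :: 'a::comm_ring_1 bipoly))"
  by (induction A rule: infinite_finite_induct) (auto intro: tdeg_mult_le)

lemma tdeg_power_le: "tdeg p \<le> d \<Longrightarrow> tdeg (p ^ n) \<le> d * n"
  for p :: "'a::comm_ring_1 bipoly"
  by (induction n) (auto intro: tdeg_mult_le)

lemma tdeg_of_nat_mult: "tdeg (of_nat k * p) \<le> tdeg (p :: 'a::comm_ring_1 bipoly)"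
  using tdeg_mult[of "of_nat k" p] by simp

lemma tdeg_map_pderiv: "tdeg (map_poly pderiv p) \<le> tdeg p"
proof (rule tdeg_leI)
  fix i j assume "coeff (coeff (map_poly pderiv p) i) j \<noteq> 0"
  then have "coeff (coeff p i) (Suc j) \<noteq> 0" by (auto simp: coeff_map_poly coeff_pderiv)
  from tdeg_ge[OF this] show "i + j \<le> tdeg p" by simp
qed

lemma tdeg_pderiv: "tdeg (pderiv p) \<le> tdeg p"
proof (rule tdeg_leI)
  fix i j assume "coeff (coeff (pderiv p) i) j \<noteq> 0"
  then have "coeff (coeff p (Suc i)) j \<noteq> 0" by (auto simp: coeff_pderiv of_nat_poly)
  from tdeg_ge[OF this] show "i + j \<le> tdeg p" by simp
qed

section \<open>Derivations of bivariate power series\<close>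

lemma fps_nth_bi_of_poly: "fps_nth (bi_of_poly p) n = fps_of_poly (coeff p n)"
  by (simp add: bi_of_poly_def coeff_map_poly)

interpretation bi_of_poly: inj_comm_ring_hom "bi_of_poly :: 'a::comm_ring_1 bipoly \<Rightarrow> 'a bifps"
proof unfold_locales
  fix p q :: "'a bipoly"
  show "bi_of_poly (p + q) = bi_of_poly p + bi_of_poly q"
    by (rule fps_ext) (simp add: fps_nth_bi_of_poly fps_of_poly_add)
  have "fps_nth (bi_of_poly p * bi_of_poly q) n = fps_of_poly (\<Sum>i\<le>n. coeff p i * coeff q (n - i))" for n
    by (simp add: fps_mult_nth fps_nth_bi_of_poly fps_of_poly_sum fps_of_poly_mult atLeast0AtMost)
  then show "bi_of_poly (p * q) = bi_of_poly p * bi_of_poly q"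
    by (intro fps_ext) (simp add: fps_nth_bi_of_poly coeff_mult)
  show "bi_of_poly p = 0 \<Longrightarrow> p = 0"
    by (metis coeff_0 fps_nth_bi_of_poly fps_of_poly_0 fps_of_poly_eq_iff fps_zero_nth poly_eqI)
qed (simp_all add: bi_of_poly_def)

locale bifps_derivation =
  fixes D :: "'a::idom bifps \<Rightarrow> 'a bifps" and pd :: "'a bipoly \<Rightarrow> 'a bipoly"
  assumes deriv_add: "D (x + y) = D x + D y"
    and deriv_mult: "D (x * y) = D x * y + x * D y"
    and deriv_bi_of_poly: "D (bi_of_poly p) = bi_of_poly (pd p)"
    and tdeg_pd_le: "tdeg (pd p) \<le> tdeg p"
begin

lemma deriv_0 [simp]: "D 0 = 0"
  by (metis add_cancel_right_right deriv_add)

lemma deriv_1 [simp]: "D 1 = 0"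
  by (metis mult_1 mult_1_right add_cancel_right_right deriv_mult)

lemma deriv_sum: "D (sum f A) = (\<Sum>i\<in>A. D (f i))"
  by (induction A rule: infinite_finite_induct) (simp_all add: deriv_add)

lemma mult_deriv_power: "x * D (x ^ k) = of_nat k * D x * x ^ k"
  by (induction k) (simp_all add: deriv_mult algebra_simps)

lemma mult_deriv_power_mult:
  "bi_of_poly p * D (bi_of_poly (p ^ k) * X)
     = bi_of_poly (of_nat k * pd p) * (bi_of_poly (p ^ k) * X) + bi_of_poly (p ^ Suc k) * D X"
proof -
  have "bi_of_poly p * D (bi_of_poly p ^ k * X)
          = bi_of_poly p * D (bi_of_poly p ^ k) * X + bi_of_poly p ^ Suc k * D X"
    by (simp add: deriv_mult algebra_simps)
  then show ?thesis
    by (simp add: mult_deriv_power deriv_bi_of_poly bi_of_poly.hom_mult bi_of_poly.hom_power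
        bi_of_poly.hom_of_nat algebra_simps)
qed

end

interpretation Dx1: bifps_derivation "Dx1 :: 'a::idom bifps \<Rightarrow> 'a bifps" "map_poly pderiv"
proof unfold_locales
  fix x y :: "'a bifps" and p :: "'a bipoly"
  show "Dx1 (x + y) = Dx1 x + Dx1 y"
    by (rule fps_ext) (simp add: Dx1_def)
  have "fps_nth (Dx1 (x * y)) n = (\<Sum>i=0..n. fps_deriv (fps_nth x i) * fps_nth y (n - i)
      + fps_nth x i * fps_deriv (fps_nth y (n - i)))" for n
    by (simp add: Dx1_def fps_mult_nth fps_deriv_sum add.commute)
  then show "Dx1 (x * y) = Dx1 x * y + x * Dx1 y"
    by (intro fps_ext) (simp add: Dx1_def fps_mult_nth sum.distrib)
  show "Dx1 (bi_of_poly p) = bi_of_poly (map_poly pderiv p)"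
    by (rule fps_ext) (simp add: Dx1_def fps_nth_bi_of_poly coeff_map_poly fps_of_poly_pderiv)
qed (rule tdeg_map_pderiv)

lemma fps_of_poly_of_nat: "fps_of_poly (of_nat n) = of_nat n"
  by (induction n) (simp_all add: fps_of_poly_add)

interpretation Dx2: bifps_derivation "Dx2 :: 'a::idom bifps \<Rightarrow> 'a bifps" pderiv
proof unfold_locales
  fix p :: "'a bipoly"
  show "Dx2 (bi_of_poly p) = bi_of_poly (pderiv p)"
    by (rule fps_ext)
      (simp add: Dx2_def fps_nth_bi_of_poly coeff_pderiv fps_of_poly_mult fps_of_poly_add fps_of_poly_of_nat)
qed (simp_all add: Dx2_def tdeg_pderiv)

lemma funpow_Dx1_Dx2_commute: "(Dx1 ^^ i) ((Dx2 ^^ j) F) = (Dx2 ^^ j) ((Dx1 ^^ i) F)"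
proof -
  have "Dx1 (Dx2 G) = Dx2 (Dx1 G)" for G :: "'a::comm_ring_1 bifps"
    by (rule fps_ext) (simp add: Dx1_def Dx2_def)
  then have "Dx1 ((Dx2 ^^ j) G) = (Dx2 ^^ j) (Dx1 G)" for G :: "'a bifps"
    by (induction j) simp_all
  then show ?thesis
    by (induction i) simp_all
qed

section \<open>Spans with degree-bounded coefficients\<close>

definition deg_span :: "'a::comm_ring_1 bifps set \<Rightarrow> nat \<Rightarrow> 'a bifps set" where
  "deg_span B T = {\<Sum>Y\<in>B. bi_of_poly (c Y) * Y | c. \<forall>Y. tdeg (c Y) \<le> T}"

lemma deg_spanI:
  "(\<And>Y. tdeg (c Y) \<le> T) \<Longrightarrow> F = (\<Sum>Y\<in>B. bi_of_poly (c Y) * Y) \<Longrightarrow> F \<in> deg_span B T"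
  unfolding deg_span_def by blast

lemma deg_spanE:
  assumes "F \<in> deg_span B T"
  obtains c where "\<And>Y. tdeg (c Y) \<le> T" "F = (\<Sum>Y\<in>B. bi_of_poly (c Y) * Y)"
  using assms unfolding deg_span_def by blast

lemma deg_span_0: "0 \<in> deg_span B T"
  by (rule deg_spanI[of "\<lambda>_. 0"]) simp_all

lemma deg_span_empty: "deg_span {} T = {0}"
  using deg_span_0 by (auto elim: deg_spanE)

lemma deg_span_add:
  assumes "F \<in> deg_span B T" "G \<in> deg_span B T"
  shows "F + G \<in> deg_span B T"
proof -
  obtain c where "\<And>Y. tdeg (c Y) \<le> T" "F = (\<Sum>Y\<in>B. bi_of_poly (c Y) * Y)"
    using assms(1) by (blast elim: deg_spanE)
  moreover obtain c' where "\<And>Y. tdeg (c' Y) \<le> T" "G = (\<Sum>Y\<in>B. bi_of_poly (c' Y) * Y)"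
    using assms(2) by (blast elim: deg_spanE)
  ultimately show ?thesis
    by (intro deg_spanI[of "\<lambda>Y. c Y + c' Y"])
      (simp_all add: tdeg_add_le sum.distrib distrib_right bi_of_poly.hom_add)
qed

lemma deg_span_uminus: "F \<in> deg_span B T \<Longrightarrow> - F \<in> deg_span B T"
  by (erule deg_spanE, rule deg_spanI[of "\<lambda>Y. - _ Y"]) (simp_all add: sum_negf bi_of_poly.hom_uminus)

lemma deg_span_diff: "F \<in> deg_span B T \<Longrightarrow> G \<in> deg_span B T \<Longrightarrow> F - G \<in> deg_span B T"
  using deg_span_add[OF _ deg_span_uminus] by fastforce

lemma deg_span_sum: "(\<And>i. i \<in> I \<Longrightarrow> F i \<in> deg_span B T) \<Longrightarrow> (\<Sum>i\<in>I. F i) \<in> deg_span B T"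
  by (induction I rule: infinite_finite_induct) (simp_all add: deg_span_0 deg_span_add)

lemma deg_span_mult:
  "F \<in> deg_span B T \<Longrightarrow> tdeg q \<le> Q \<Longrightarrow> bi_of_poly q * F \<in> deg_span B (Q + T)"
  by (erule deg_spanE, rule deg_spanI[of "\<lambda>Y. q * _ Y"])
    (simp_all add: tdeg_mult_le sum_distrib_left mult.assoc bi_of_poly.hom_mult)

lemma deg_span_generator:
  assumes "finite B" "Y \<in> B" "tdeg q \<le> T"
  shows "bi_of_poly q * Y \<in> deg_span B T"
proof (rule deg_spanI[of "\<lambda>Z. if Z = Y then q else 0"])
  have "(\<Sum>Z\<in>B. bi_of_poly (if Z = Y then q else 0) * Z) = (\<Sum>Z\<in>B. if Z = Y then bi_of_poly q * Y else 0)"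
    by (rule sum.cong) auto
  then show "bi_of_poly q * Y = (\<Sum>Z\<in>B. bi_of_poly (if Z = Y then q else 0) * Z)"
    using assms(1,2) by simp
qed (use assms(3) in simp)

lemma deg_span_mono:
  assumes "F \<in> deg_span B T" "finite B'" "B \<subseteq> B'" "T \<le> T'"
  shows "F \<in> deg_span B' T'"
proof -
  obtain c where c: "\<And>Y. tdeg (c Y) \<le> T" "F = (\<Sum>Y\<in>B. bi_of_poly (c Y) * Y)"
    using assms(1) by (blast elim: deg_spanE)
  have "F = (\<Sum>Y\<in>B'. bi_of_poly (if Y \<in> B then c Y else 0) * Y)"
    unfolding c(2) using assms(2,3) by (intro sum.mono_neutral_cong_left) auto
  then show ?thesis
    using c(1) assms(4) by (intro deg_spanI) (auto intro: order_trans)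
qed

lemma deg_span_trans:
  assumes "finite B" "F \<in> deg_span B T" "\<And>Y. Y \<in> B \<Longrightarrow> bi_of_poly q * Y \<in> deg_span B' T'"
  shows "bi_of_poly q * F \<in> deg_span B' (T + T')"
proof -
  obtain c where c: "\<And>Y. tdeg (c Y) \<le> T" "F = (\<Sum>Y\<in>B. bi_of_poly (c Y) * Y)"
    using assms(2) by (blast elim: deg_spanE)
  have "bi_of_poly q * F = (\<Sum>Y\<in>B. bi_of_poly (c Y) * (bi_of_poly q * Y))"
    unfolding c(2) sum_distrib_left by (simp add: algebra_simps)
  also have "\<dots> \<in> deg_span B' (T + T')"
    by (intro deg_span_sum deg_span_mult assms(3) c(1))
  finally show ?thesis .
qed

lemma leading_relation_in_deg_span:
  fixes D :: "'a::comm_ring_1 bifps \<Rightarrow> 'a bifps"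
  assumes "nonzero_op L" "ord_deg_bounded L r d" "(\<Sum>j\<le>r. bi_of_poly (L j) * (D ^^ j) f) = 0"
  obtains r' where "r' \<le> r" "L r' \<noteq> 0" "tdeg (L r') \<le> d"
    "bi_of_poly (L r') * (D ^^ r') f \<in> deg_span {(D ^^ i) f | i. i < r'} d"
proof -
  have support: "{j. L j \<noteq> 0} \<subseteq> {..r}" and deg: "\<And>j. tdeg (L j) \<le> d"
    using assms(2) unfolding ord_deg_bounded_def by (auto simp: not_less[symmetric])
  define r' where "r' = Max {j. L j \<noteq> 0}"
  have fin: "finite {j. L j \<noteq> 0}"
    using support by (rule finite_subset) simp
  have "L r' \<noteq> 0"
    unfolding r'_def using Max_in[OF fin] assms(1) unfolding nonzero_op_def by blast
  then have "r' \<le> r"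
    using support by blast
  have above: "L j = 0" if "r' < j" for j
    using that Max_ge[OF fin, of j] unfolding r'_def by force
  have "(\<Sum>j<Suc r'. bi_of_poly (L j) * (D ^^ j) f) = 0"
    unfolding lessThan_Suc_atMost using assms(3) \<open>r' \<le> r\<close> above
    by (subst (asm) sum.mono_neutral_right[of "{..r}" "{..r'}"]) auto
  then have "bi_of_poly (L r') * (D ^^ r') f = - (\<Sum>j<r'. bi_of_poly (L j) * (D ^^ j) f)"
    by (simp add: eq_neg_iff_add_eq_0 add.commute)
  also have "\<dots> \<in> deg_span {(D ^^ i) f | i. i < r'} d"
    using deg by (intro deg_span_uminus deg_span_sum deg_span_generator) auto
  finally show ?thesis
    using that \<open>r' \<le> r\<close> \<open>L r' \<noteq> 0\<close> deg by blast
qed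

context bifps_derivation
begin

lemma mult_deriv_in_deg_span:
  assumes "finite B'" "B \<subseteq> B'" "F \<in> deg_span B T" "tdeg q \<le> d"
    and deriv: "\<And>Y. Y \<in> B \<Longrightarrow> bi_of_poly q * D Y \<in> deg_span B' d"
  shows "bi_of_poly q * D F \<in> deg_span B' (T + d)"
proof -
  obtain c where c: "\<And>Y. tdeg (c Y) \<le> T" "F = (\<Sum>Y\<in>B. bi_of_poly (c Y) * Y)"
    using assms(3) by (blast elim: deg_spanE)
  have "bi_of_poly q * D F
      = (\<Sum>Y\<in>B. bi_of_poly (q * pd (c Y)) * Y + bi_of_poly (c Y) * (bi_of_poly q * D Y))"
    unfolding c(2) deriv_sum sum_distrib_left
    by (simp add: deriv_mult deriv_bi_of_poly bi_of_poly.hom_mult algebra_simps)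
  also have "\<dots> \<in> deg_span B' (T + d)"
  proof (intro deg_span_sum deg_span_add)
    fix Y assume "Y \<in> B"
    have "tdeg (q * pd (c Y)) \<le> T + d"
      using tdeg_mult_le[OF assms(4) order_trans[OF tdeg_pd_le c(1)]] by (simp add: add.commute)
    with \<open>Y \<in> B\<close> show "bi_of_poly (q * pd (c Y)) * Y \<in> deg_span B' (T + d)"
      using assms(1,2) by (blast intro: deg_span_generator)
    show "bi_of_poly (c Y) * (bi_of_poly q * D Y) \<in> deg_span B' (T + d)"
      using deg_span_mult[OF deriv[OF \<open>Y \<in> B\<close>] c(1)] .
  qed
  finally show ?thesis .
qed

lemma power_funpow_in_deg_span:
  assumes p: "tdeg p \<le> d" and fin: "\<And>k. finite (B k)" and mono: "\<And>k. B k \<subseteq> B (Suc k)"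
    and step: "\<And>k Y. Y \<in> B k \<Longrightarrow> bi_of_poly p * D Y \<in> deg_span (B (Suc k)) d"
    and H: "bi_of_poly (p ^ e) * H \<in> deg_span (B 0) T"
  shows "bi_of_poly (p ^ (e + a)) * (D ^^ a) H \<in> deg_span (B a) (T + d * a)"
proof (induction a)
  case 0
  show ?case using H by simp
next
  case (Suc a)
  let ?X = "bi_of_poly (p ^ (e + a)) * (D ^^ a) H"
  have "bi_of_poly p * D ?X \<in> deg_span (B (Suc a)) (T + d * Suc a)"
    using mult_deriv_in_deg_span[OF fin mono Suc.IH p step] by (simp add: algebra_simps)
  moreover have "tdeg (of_nat (e + a) * pd p) \<le> d"
    by (rule order_trans[OF tdeg_of_nat_mult order_trans[OF tdeg_pd_le p]])
  then have "bi_of_poly (of_nat (e + a) * pd p) * ?X \<in> deg_span (B a) (d + (T + d * a))"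
    by (rule deg_span_mult[OF Suc.IH])
  then have "bi_of_poly (of_nat (e + a) * pd p) * ?X \<in> deg_span (B (Suc a)) (T + d * Suc a)"
    by (rule deg_span_mono[OF _ fin mono]) simp
  ultimately have "bi_of_poly p * D ?X - bi_of_poly (of_nat (e + a) * pd p) * ?X
      \<in> deg_span (B (Suc a)) (T + d * Suc a)"
    by (rule deg_span_diff)
  then show ?case
    by (simp add: mult_deriv_power_mult)
qed

lemma funpow_in_deg_span:
  assumes "\<And>k. finite (B k)" "\<And>k. B k \<subseteq> B (Suc k)" "\<And>k. D ` B k \<subseteq> B (Suc k)"
    and "G \<in> deg_span (B 0) T"
  shows "(D ^^ a) G \<in> deg_span (B a) T"
  using power_funpow_in_deg_span[of 1 0 B 0 G T a] assms
  by (fastforce intro: deg_span_generator)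

lemma mult_deriv_in_deg_span_of_relation:
  assumes "tdeg p \<le> d" "i < r" "i \<le> k"
    and rel: "bi_of_poly p * (D ^^ r) h \<in> deg_span {(D ^^ j) h | j. j < r} d"
  shows "bi_of_poly p * D ((D ^^ i) h) \<in> deg_span {(D ^^ j) h | j. j < r \<and> j \<le> Suc k} d"
proof (cases "Suc i < r")
  case True
  then have "D ((D ^^ i) h) \<in> {(D ^^ j) h | j. j < r \<and> j \<le> Suc k}"
    using assms(3) by (auto intro!: exI[of _ "Suc i"])
  then show ?thesis
    using assms(1) by (intro deg_span_generator) simp_all
next
  case False
  then have "r = Suc i"
    using assms(2) by simp
  moreover have "{(D ^^ j) h | j. j < r} \<subseteq> {(D ^^ j) h | j. j < r \<and> j \<le> Suc k}"
    using assms(3) \<open>r = Suc i\<close> by auto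
  ultimately show ?thesis
    using deg_span_mono[OF rel] by simp
qed

text \<open>Recording \<open>i \<le> a\<close> keeps the exponent in the two-variable lemma below at \<open>a + b\<close>.\<close>

lemma power_funpow_in_deg_span_of_relation:
  assumes "p \<noteq> 0" "tdeg p \<le> d"
    and rel: "bi_of_poly p * (D ^^ r) h \<in> deg_span {(D ^^ i) h | i. i < r} d"
  shows "bi_of_poly (p ^ a) * (D ^^ a) h \<in> deg_span {(D ^^ i) h | i. i < r \<and> i \<le> a} (d * a)"
proof -
  define B where "B k = {(D ^^ i) h | i. i < r \<and> i \<le> k}" for k
  have fin: "finite (B k)" for k
    unfolding B_def by simp
  have mono: "B k \<subseteq> B (Suc k)" for k
    unfolding B_def by auto
  have "bi_of_poly p * D Y \<in> deg_span (B (Suc k)) d" if "Y \<in> B k" for k Y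
    using that mult_deriv_in_deg_span_of_relation[OF assms(2) _ _ rel] unfolding B_def by blast
  moreover have "bi_of_poly (p ^ 0) * h \<in> deg_span (B 0) 0"
  proof (cases "r = 0")
    case True
    then show ?thesis
      using rel assms(1) by (simp add: deg_span_empty deg_span_0)
  next
    case False
    then have "h \<in> B 0"
      unfolding B_def by force
    then show ?thesis
      using deg_span_generator[OF fin, of h 0 1] by simp
  qed
  ultimately have "bi_of_poly (p ^ (0 + a)) * (D ^^ a) h \<in> deg_span (B a) (0 + d * a)"
    by (rule power_funpow_in_deg_span[where B = B, OF assms(2) fin mono])
  then show ?thesis
    by (simp add: B_def)
qed

lemma power_funpow_in_deg_span_iterates:
  assumes "tdeg p \<le> d" "finite B" "bi_of_poly (p ^ e) * H \<in> deg_span B T"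
  shows "bi_of_poly (p ^ (e + b)) * (D ^^ b) H
           \<in> deg_span {(D ^^ s) Y | s Y. s \<le> b \<and> Y \<in> B} (T + d * b)"
proof -
  define B' where "B' k = {(D ^^ s) Y | s Y. s \<le> k \<and> Y \<in> B}" for k
  have fin: "finite (B' k)" for k
    unfolding B'_def using assms(2) by (intro finite_image_set2) auto
  have mono: "B' k \<subseteq> B' (Suc k)" for k
    unfolding B'_def by fastforce
  have "bi_of_poly p * D Y \<in> deg_span (B' (Suc k)) d" if "Y \<in> B' k" for k Y
  proof -
    have "D Y \<in> B' (Suc k)"
      using that unfolding B'_def by (force intro: exI[of _ "Suc _"])
    then show ?thesis
      using fin assms(1) by (blast intro: deg_span_generator)
  qed
  moreover have "B' 0 = B"
    unfolding B'_def by auto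
  ultimately show ?thesis
    using power_funpow_in_deg_span[where B = B', OF assms(1) fin mono] assms(3) by (simp add: B'_def)
qed

end

section \<open>Kernel vectors made of minors\<close>

definition submatrix :: "('r \<Rightarrow> 'c \<Rightarrow> 'a) \<Rightarrow> nat \<Rightarrow> (nat \<Rightarrow> 'r) \<Rightarrow> (nat \<Rightarrow> 'c) \<Rightarrow> 'a mat" where
  "submatrix A k I J = mat k k (\<lambda>(i, j). A (I i) (J j))"

lemma submatrix_carrier: "submatrix A k I J \<in> carrier_mat k k"
  by (simp add: submatrix_def)

lemma submatrix_index [simp]:
  "i < k \<Longrightarrow> j < k \<Longrightarrow> submatrix A k I J $$ (i, j) = A (I i) (J j)"
  by (simp add: submatrix_def)

lemma submatrix_cong:
  "(\<And>i. i < k \<Longrightarrow> I i = I' i) \<Longrightarrow> (\<And>j. j < k \<Longrightarrow> J j = J' j)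
    \<Longrightarrow> submatrix A k I J = submatrix A k I' J'"
  by (rule eq_matI) (simp_all add: submatrix_def)

lemma det_submatrix_0 [simp]: "det (submatrix A 0 I J) = 1"
proof -
  have "submatrix A 0 I J = 1\<^sub>m 0"
    by (rule eq_matI) (simp_all add: submatrix_def)
  then show ?thesis
    by simp
qed

definition last_row_cofactor :: "('r \<Rightarrow> 'c \<Rightarrow> 'a::comm_ring_1) \<Rightarrow> nat \<Rightarrow> (nat \<Rightarrow> 'r) \<Rightarrow> (nat \<Rightarrow> 'c) \<Rightarrow> nat \<Rightarrow> 'a" where
  "last_row_cofactor A k I J t = (-1) ^ (k + t) * det (submatrix A k I (\<lambda>s. J (if s < t then s else Suc s)))"

lemma det_submatrix_last_row_expansion:
  "det (submatrix A (Suc k) (I(k := r)) J) = (\<Sum>t<Suc k. A r (J t) * last_row_cofactor A k I J t)"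
proof -
  have delete: "mat_delete (submatrix A (Suc k) (I(k := r)) J) k t
      = submatrix A k I (\<lambda>s. J (if s < t then s else Suc s))" for t
    by (rule eq_matI) (simp_all add: mat_delete_def submatrix_def)
  have "det (submatrix A (Suc k) (I(k := r)) J)
      = (\<Sum>t<Suc k. submatrix A (Suc k) (I(k := r)) J $$ (k, t) * cofactor (submatrix A (Suc k) (I(k := r)) J) k t)"
    by (rule laplace_expansion_row[OF submatrix_carrier]) simp
  also have "\<dots> = (\<Sum>t<Suc k. A r (J t) * last_row_cofactor A k I J t)"
    by (intro sum.cong refl) (simp add: cofactor_def last_row_cofactor_def delete)
  finally show ?thesis .
qed

lemma last_row_cofactor_last: "last_row_cofactor A k I J k = det (submatrix A k I J)"
proof -
  have "submatrix A k I (\<lambda>s. J (if s < k then s else Suc s)) = submatrix A k I J"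
    by (rule submatrix_cong) simp_all
  then show ?thesis
    unfolding last_row_cofactor_def by (simp add: power_mult flip: mult_2)
qed

lemma maximal_nonsingular_submatrix:
  fixes A :: "'r \<Rightarrow> 'c \<Rightarrow> 'a::comm_ring_1"
  assumes "finite R"
  obtains k I J where "k \<le> card R" "inj_on I {..<k}" "I ` {..<k} \<subseteq> R"
    "inj_on J {..<k}" "J ` {..<k} \<subseteq> C" "det (submatrix A k I J) \<noteq> 0"
    "\<And>r c. r \<in> R \<Longrightarrow> c \<in> C - J ` {..<k} \<Longrightarrow> det (submatrix A (Suc k) (I(k := r)) (J(k := c))) = 0"
proof -
  define nonsingular where "nonsingular k I J \<longleftrightarrow> inj_on I {..<k} \<and> I ` {..<k} \<subseteq> R
      \<and> inj_on J {..<k} \<and> J ` {..<k} \<subseteq> C \<and> det (submatrix A k I J) \<noteq> 0" for k I J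
  define K where "K = {k. \<exists>I J. nonsingular k I J}"
  have bounded: "k \<le> card R" if "k \<in> K" for k
    using that card_inj_on_le[OF _ _ assms] unfolding K_def nonsingular_def by fastforce
  then have "finite K"
    using finite_nat_set_iff_bounded_le by blast
  moreover have "0 \<in> K"
    unfolding K_def nonsingular_def by simp
  ultimately have "Max K \<in> K"
    by (intro Max_in) auto
  have maximal: "k \<le> Max K" if "k \<in> K" for k
    using \<open>finite K\<close> that by simp
  obtain I J where nonsingular: "nonsingular (Max K) I J"
    using \<open>Max K \<in> K\<close> unfolding K_def by blast
  have "det (submatrix A (Suc (Max K)) (I(Max K := r)) (J(Max K := c))) = 0"
    if "r \<in> R" "c \<in> C - J ` {..<Max K}" for r c
  proof (cases "r \<in> I ` {..<Max K}")
    case True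
    then obtain s where "s < Max K" "I s = r"
      by blast
    then show ?thesis
      by (intro det_identical_rows[OF submatrix_carrier, of s "Max K"] eq_vecI) (auto simp: submatrix_def)
  next
    case False
    show ?thesis
    proof (rule ccontr)
      assume "det (submatrix A (Suc (Max K)) (I(Max K := r)) (J(Max K := c))) \<noteq> 0"
      with nonsingular False that
      have "nonsingular (Suc (Max K)) (I(Max K := r)) (J(Max K := c))"
        unfolding nonsingular_def by (auto simp: lessThan_Suc inj_on_fun_updI)
      then show False
        using maximal[of "Suc (Max K)"] unfolding K_def by auto
    qed
  qed
  with nonsingular bounded[OF \<open>Max K \<in> K\<close>] show thesis
    using that unfolding nonsingular_def by blast
qed

text \<open>Cramer's rule: bordering a maximal nonsingular minor with any further row gives a singular
  matrix, and the expansion of its determinant along that row is the kernel vector.\<close>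

lemma bordered_minor_relation:
  fixes A :: "'r \<Rightarrow> 'c \<Rightarrow> 'a::comm_ring_1"
  assumes "finite R" "finite C" "card R < card C"
  obtains k I J where "k \<le> card R" "I ` {..<k} \<subseteq> R" "inj_on J {..<Suc k}" "J ` {..<Suc k} \<subseteq> C"
    "last_row_cofactor A k I J k \<noteq> 0"
    "\<And>r. r \<in> R \<Longrightarrow> (\<Sum>t<Suc k. A r (J t) * last_row_cofactor A k I J t) = 0"
proof -
  obtain k I J where k: "k \<le> card R" "inj_on I {..<k}" "I ` {..<k} \<subseteq> R"
    "inj_on J {..<k}" "J ` {..<k} \<subseteq> C" "det (submatrix A k I J) \<noteq> 0"
    and maximal: "\<And>r c. r \<in> R \<Longrightarrow> c \<in> C - J ` {..<k}
                   \<Longrightarrow> det (submatrix A (Suc k) (I(k := r)) (J(k := c))) = 0"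
    by (rule maximal_nonsingular_submatrix[where A = A and C = C, OF assms(1)]) blast
  have "card (J ` {..<k}) < card C"
    using card_image_le[of "{..<k}" J] k(1) assms(3) by simp
  then have "\<not> C \<subseteq> J ` {..<k}"
    using card_mono[of "J ` {..<k}" C] by auto
  then obtain c where c: "c \<in> C" "c \<notin> J ` {..<k}"
    by blast
  have "inj_on (J(k := c)) {..<Suc k}" "J(k := c) ` {..<Suc k} \<subseteq> C"
    using k(4,5) c by (auto simp: lessThan_Suc inj_on_fun_updI)
  moreover have "submatrix A k I (J(k := c)) = submatrix A k I J"
    by (rule submatrix_cong) simp_all
  then have "last_row_cofactor A k I (J(k := c)) k \<noteq> 0"
    using k(6) by (simp add: last_row_cofactor_last)
  moreover have "(\<Sum>t<Suc k. A r ((J(k := c)) t) * last_row_cofactor A k I (J(k := c)) t) = 0" if "r \<in> R" for r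
    using maximal[OF that, of c] c unfolding det_submatrix_last_row_expansion by blast
  ultimately show thesis
    using that k(1,3) by blast
qed

lemma kernel_vector_of_minors:
  fixes A :: "'r \<Rightarrow> 'c \<Rightarrow> 'a::comm_ring_1"
  assumes "finite R" "finite C" "card R < card C"
  obtains a where "\<exists>c\<in>C. a c \<noteq> 0" "\<And>r. r \<in> R \<Longrightarrow> (\<Sum>c\<in>C. a c * A r c) = 0"
    "\<And>c. a c = 0 \<or> (\<exists>k\<le>card R. \<exists>I J e. I ` {..<k} \<subseteq> R \<and> J ` {..<k} \<subseteq> C
                        \<and> a c = (-1) ^ e * det (submatrix A k I J))"
proof -
  obtain k I J where k: "k \<le> card R" "I ` {..<k} \<subseteq> R" and J: "inj_on J {..<Suc k}" "J ` {..<Suc k} \<subseteq> C"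
    and nonzero: "last_row_cofactor A k I J k \<noteq> 0"
    and relation: "\<And>r. r \<in> R \<Longrightarrow> (\<Sum>t<Suc k. A r (J t) * last_row_cofactor A k I J t) = 0"
    by (rule bordered_minor_relation[where A = A, OF assms]) blast
  define a where "a c = (if c \<in> J ` {..<Suc k} then last_row_cofactor A k I J (the_inv_into {..<Suc k} J c) else 0)" for c
  have a_J: "a (J t) = last_row_cofactor A k I J t" if "t < Suc k" for t
    using that J(1) by (simp add: a_def the_inv_into_f_f)
  have "(\<Sum>c\<in>C. a c * A r c) = 0" if "r \<in> R" for r
  proof -
    have "(\<Sum>c\<in>C. a c * A r c) = (\<Sum>c\<in>J ` {..<Suc k}. a c * A r c)"
      using J(2) assms(2) by (intro sum.mono_neutral_right) (auto simp: a_def)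
    also have "\<dots> = (\<Sum>t<Suc k. A r (J t) * last_row_cofactor A k I J t)"
      using J(1) by (simp add: sum.reindex a_J mult.commute)
    finally show ?thesis
      using relation[OF that] by simp
  qed
  moreover have "J k \<in> C" "a (J k) \<noteq> 0"
    using J(2) a_J[of k] nonzero by auto
  moreover have "a c = 0 \<or> (\<exists>k\<le>card R. \<exists>I J e. I ` {..<k} \<subseteq> R \<and> J ` {..<k} \<subseteq> C
                        \<and> a c = (-1) ^ e * det (submatrix A k I J))" for c
  proof (cases "c \<in> J ` {..<Suc k}")
    case True
    then obtain t where "t < Suc k" "c = J t"
      by blast
    moreover have "(\<lambda>s. J (if s < t then s else Suc s)) ` {..<k} \<subseteq> C"
      using J(2) \<open>t < Suc k\<close> by auto
    ultimately show ?thesis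
      using k a_J unfolding last_row_cofactor_def by blast
  qed (simp add: a_def)
  ultimately show thesis
    using that by blast
qed

lemma tdeg_det:
  fixes M :: "'a::comm_ring_1 bipoly mat"
  assumes M: "M \<in> carrier_mat k k" and entries: "\<And>i j. i < k \<Longrightarrow> j < k \<Longrightarrow> tdeg (M $$ (i, j)) \<le> T"
  shows "tdeg (det M) \<le> k * T"
  unfolding det_def'[OF M]
proof (rule tdeg_sum_le)
  fix \<sigma> assume "\<sigma> \<in> {\<sigma>. \<sigma> permutes {0..<k}}"
  then have "\<sigma> i < k" if "i < k" for i
    using that permutes_in_image by fastforce
  then have "(\<Sum>i = 0..<k. tdeg (M $$ (i, \<sigma> i))) \<le> (\<Sum>i = 0..<k. T)"
    by (intro sum_mono entries) auto
  then have "tdeg (\<Prod>i = 0..<k. M $$ (i, \<sigma> i)) \<le> k * T"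
    using tdeg_prod_le order_trans by fastforce
  then show "tdeg (signof \<sigma> * (\<Prod>i = 0..<k. M $$ (i, \<sigma> i))) \<le> k * T"
    by (simp add: sign_def)
qed

lemma tdeg_neg_one_power_mult [simp]: "tdeg ((-1) ^ e * p) = tdeg (p :: 'a::comm_ring_1 bipoly)"
  by (cases "even e") simp_all

lemma tdeg_bounded_kernel_vector:
  fixes A :: "'r \<Rightarrow> 'c \<Rightarrow> 'a::comm_ring_1 bipoly"
  assumes "finite R" "finite C" "card R < card C"
    and entries: "\<And>r c. r \<in> R \<Longrightarrow> c \<in> C \<Longrightarrow> tdeg (A r c) \<le> T"
  obtains a where "\<exists>c\<in>C. a c \<noteq> 0" "\<And>c. tdeg (a c) \<le> card R * T"
    "\<And>r. r \<in> R \<Longrightarrow> (\<Sum>c\<in>C. a c * A r c) = 0"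
proof -
  obtain a where a: "\<exists>c\<in>C. a c \<noteq> 0" "\<And>r. r \<in> R \<Longrightarrow> (\<Sum>c\<in>C. a c * A r c) = 0"
    and minors: "\<And>c. a c = 0 \<or> (\<exists>k\<le>card R. \<exists>I J e. I ` {..<k} \<subseteq> R \<and> J ` {..<k} \<subseteq> C
                        \<and> a c = (-1) ^ e * det (submatrix A k I J))"
    by (rule kernel_vector_of_minors[where A = A, OF assms(1-3)]) blast
  have "tdeg (a c) \<le> card R * T" for c
    using minors[of c]
  proof
    assume "\<exists>k\<le>card R. \<exists>I J e. I ` {..<k} \<subseteq> R \<and> J ` {..<k} \<subseteq> C
              \<and> a c = (-1) ^ e * det (submatrix A k I J)"
    then obtain k I J e where "k \<le> card R" "I ` {..<k} \<subseteq> R" "J ` {..<k} \<subseteq> C"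
      "a c = (-1) ^ e * det (submatrix A k I J)"
      by blast
    moreover from this have "tdeg (det (submatrix A k I J)) \<le> k * T"
      by (intro tdeg_det[OF submatrix_carrier]) (auto intro!: entries)
    ultimately show ?thesis
      by (simp add: order_trans)
  qed simp
  with a show thesis
    using that by blast
qed

lemma deg_span_linear_dependence:
  fixes G :: "nat \<Rightarrow> 'a::idom bifps"
  assumes "finite B" "card B \<le> m" "P \<noteq> 0"
    and G: "\<And>k. k \<le> m \<Longrightarrow> bi_of_poly P * G k \<in> deg_span B T"
  shows "\<exists>A. nonzero_op A \<and> ord_deg_bounded A m (m * T) \<and> (\<Sum>k\<le>m. bi_of_poly (A k) * G k) = 0"
proof -
  have "\<forall>k. \<exists>c. k \<le> m \<longrightarrow> (\<forall>Y. tdeg (c Y) \<le> T) \<and> bi_of_poly P * G k = (\<Sum>Y\<in>B. bi_of_poly (c Y) * Y)"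
    using G unfolding deg_span_def by blast
  from choice[OF this] obtain c where "\<forall>k. k \<le> m \<longrightarrow> (\<forall>Y. tdeg (c k Y) \<le> T)
      \<and> bi_of_poly P * G k = (\<Sum>Y\<in>B. bi_of_poly (c k Y) * Y)"
    by (rule exE)
  then have c: "\<And>k Y. k \<le> m \<Longrightarrow> tdeg (c k Y) \<le> T"
    "\<And>k. k \<le> m \<Longrightarrow> bi_of_poly P * G k = (\<Sum>Y\<in>B. bi_of_poly (c k Y) * Y)"
    by blast+
  obtain a where a: "\<exists>k\<in>{..m}. a k \<noteq> 0" "\<And>k. tdeg (a k) \<le> card B * T"
    "\<And>Y. Y \<in> B \<Longrightarrow> (\<Sum>k\<le>m. a k * c k Y) = 0"
    using tdeg_bounded_kernel_vector[of B "{..m}" "\<lambda>Y k. c k Y" T] assms(1,2) c(1) by auto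
  define A where "A k = (if k \<le> m then a k else 0)" for k
  have "bi_of_poly P * (bi_of_poly (A k) * G k) = (\<Sum>Y\<in>B. bi_of_poly (a k * c k Y) * Y)"
    if "k \<le> m" for k
  proof -
    have "bi_of_poly P * (bi_of_poly (A k) * G k) = bi_of_poly (a k) * (bi_of_poly P * G k)"
      using that by (simp add: A_def mult_ac)
    also have "\<dots> = (\<Sum>Y\<in>B. bi_of_poly (a k * c k Y) * Y)"
      using that by (simp add: c(2) sum_distrib_left bi_of_poly.hom_mult mult.assoc)
    finally show ?thesis .
  qed
  then have "bi_of_poly P * (\<Sum>k\<le>m. bi_of_poly (A k) * G k)
      = (\<Sum>k\<le>m. \<Sum>Y\<in>B. bi_of_poly (a k * c k Y) * Y)"
    unfolding sum_distrib_left by (intro sum.cong) simp_all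
  also have "\<dots> = (\<Sum>Y\<in>B. bi_of_poly (\<Sum>k\<le>m. a k * c k Y) * Y)"
    by (subst sum.swap) (simp add: bi_of_poly.hom_sum sum_distrib_right)
  also have "\<dots> = 0"
    using a(3) by simp
  finally have "(\<Sum>k\<le>m. bi_of_poly (A k) * G k) = 0"
    using assms(3) by simp
  moreover have "nonzero_op A"
    using a(1) unfolding nonzero_op_def A_def by auto
  moreover have "ord_deg_bounded A m (m * T)"
    unfolding ord_deg_bounded_def A_def
    using a(2) order_trans[OF a(2) mult_le_mono1[OF assms(2)]] by simp
  ultimately show ?thesis
    by blast
qed

section \<open>Mixed derivatives\<close>

definition mixed_derivs :: "'a::comm_ring_1 bifps \<Rightarrow> nat \<Rightarrow> 'a bifps set" where
  "mixed_derivs f n = {(Dx1 ^^ i) ((Dx2 ^^ j) f) | i j. i + j \<le> n}"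

lemma finite_mixed_derivs: "finite (mixed_derivs f n)"
proof -
  have "mixed_derivs f n \<subseteq> {(Dx1 ^^ i) ((Dx2 ^^ j) f) | i j. i \<le> n \<and> j \<le> n}"
    unfolding mixed_derivs_def by force
  then show ?thesis
    by (rule finite_subset) (intro finite_image_set2; simp)
qed

lemma mixed_derivs_mono: "mixed_derivs f n \<subseteq> mixed_derivs f (Suc n)"
  unfolding mixed_derivs_def by force

lemma Dx1_mixed_derivs: "Dx1 ` mixed_derivs f n \<subseteq> mixed_derivs f (Suc n)"
  unfolding mixed_derivs_def by (force intro: exI[of _ "Suc _"])

lemma Dx2_mixed_derivs: "Dx2 ` mixed_derivs f n \<subseteq> mixed_derivs f (Suc n)"
proof -
  have "Dx2 ((Dx1 ^^ i) ((Dx2 ^^ j) f)) = (Dx1 ^^ i) ((Dx2 ^^ Suc j) f)" for i j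
    using funpow_Dx1_Dx2_commute[of i "Suc j" f] by (simp add: funpow_Dx1_Dx2_commute)
  then show ?thesis
    unfolding mixed_derivs_def by (force intro: exI[of _ "Suc _"])
qed

lemma apply_op12_in_deg_span:
  assumes "\<forall>i j. tdeg (L i j) \<le> d"
  shows "apply_op12 L r f \<in> deg_span (mixed_derivs f r) d"
  unfolding apply_op12_def
proof (rule deg_span_sum)
  fix x assume "x \<in> {(i, j). i + j \<le> r}"
  then obtain i j where "x = (i, j)" "i + j \<le> r"
    by blast
  moreover from this have "(Dx1 ^^ i) ((Dx2 ^^ j) f) \<in> mixed_derivs f r"
    unfolding mixed_derivs_def by blast
  ultimately show "(case x of (i, j) \<Rightarrow> bi_of_poly (L i j) * (Dx1 ^^ i) ((Dx2 ^^ j) f))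
      \<in> deg_span (mixed_derivs f r) d"
    using assms by (simp add: deg_span_generator[OF finite_mixed_derivs])
qed

definition deriv_box :: "'a::comm_ring_1 bifps \<Rightarrow> nat \<Rightarrow> nat \<Rightarrow> 'a bifps set" where
  "deriv_box f r1 r2 = (\<lambda>(i, j). (Dx1 ^^ i) ((Dx2 ^^ j) f)) ` ({..<r1} \<times> {..<r2})"

lemma finite_deriv_box: "finite (deriv_box f r1 r2)"
  unfolding deriv_box_def by simp

lemma card_deriv_box: "card (deriv_box f r1 r2) \<le> r1 * r2"
  unfolding deriv_box_def using card_image_le[of "{..<r1} \<times> {..<r2}"]
  by (simp add: card_cartesian_product)

lemma deriv_box_memI: "i < r1 \<Longrightarrow> j < r2 \<Longrightarrow> (Dx1 ^^ i) ((Dx2 ^^ j) f) \<in> deriv_box f r1 r2"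
  unfolding deriv_box_def by force

context
  fixes f :: "'a::idom bifps" and p1 p2 :: "'a bipoly" and r1 r2 d :: nat
  assumes p1: "p1 \<noteq> 0" "tdeg p1 \<le> d"
    and rel1: "bi_of_poly p1 * (Dx1 ^^ r1) f \<in> deg_span {(Dx1 ^^ i) f | i. i < r1} d"
    and p2: "p2 \<noteq> 0" "tdeg p2 \<le> d"
    and rel2: "bi_of_poly p2 * (Dx2 ^^ r2) f \<in> deg_span {(Dx2 ^^ j) f | j. j < r2} d"
begin

lemma power_mult_mixed_deriv_in_deg_span_box_if_Dx1_order_less:
  assumes "i < r1" "s + i \<le> n"
  shows "bi_of_poly (p2 ^ n) * (Dx2 ^^ s) ((Dx1 ^^ i) f) \<in> deg_span (deriv_box f r1 r2) (d * n)"
proof -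
  let ?B2 = "{(Dx2 ^^ j) f | j. j < r2 \<and> j \<le> s}"
  have "bi_of_poly (p2 ^ s) * (Dx2 ^^ s) f \<in> deg_span ?B2 (d * s)"
    by (rule Dx2.power_funpow_in_deg_span_of_relation[OF p2 rel2])
  then have "bi_of_poly (p2 ^ (s + i)) * (Dx1 ^^ i) ((Dx2 ^^ s) f)
      \<in> deg_span {(Dx1 ^^ t) Y | t Y. t \<le> i \<and> Y \<in> ?B2} (d * s + d * i)"
    by (rule Dx1.power_funpow_in_deg_span_iterates[OF p2(2), rotated]) simp
  moreover have "{(Dx1 ^^ t) Y | t Y. t \<le> i \<and> Y \<in> ?B2} \<subseteq> deriv_box f r1 r2"
    using assms(1) by (auto intro: deriv_box_memI)
  ultimately have scaled: "bi_of_poly (p2 ^ (s + i)) * (Dx1 ^^ i) ((Dx2 ^^ s) f)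
      \<in> deg_span (deriv_box f r1 r2) (d * (s + i))"
    by (rule deg_span_mono[OF _ finite_deriv_box]) (simp add: algebra_simps)
  have "bi_of_poly (p2 ^ n) * (Dx2 ^^ s) ((Dx1 ^^ i) f)
      = bi_of_poly (p2 ^ (n - (s + i))) * (bi_of_poly (p2 ^ (s + i)) * (Dx1 ^^ i) ((Dx2 ^^ s) f))"
    using assms(2) by (simp add: funpow_Dx1_Dx2_commute mult.assoc[symmetric]
        flip: bi_of_poly.hom_mult power_add)
  also have "\<dots> \<in> deg_span (deriv_box f r1 r2) (d * (n - (s + i)) + d * (s + i))"
    by (rule deg_span_mult[OF scaled tdeg_power_le[OF p2(2)]])
  also have "d * (n - (s + i)) + d * (s + i) = d * n"
    using assms(2) by (simp flip: add_mult_distrib2)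
  finally show ?thesis .
qed

lemma power_mult_mixed_deriv_in_deg_span_box:
  "bi_of_poly ((p1 * p2) ^ (a + b)) * (Dx1 ^^ a) ((Dx2 ^^ b) f)
     \<in> deg_span (deriv_box f r1 r2) (2 * d * (a + b))"
proof -
  have "bi_of_poly (p1 ^ a) * (Dx1 ^^ a) f \<in> deg_span {(Dx1 ^^ i) f | i. i < r1 \<and> i \<le> a} (d * a)"
    by (rule Dx1.power_funpow_in_deg_span_of_relation[OF p1 rel1])
  then have "bi_of_poly (p1 ^ (a + b)) * (Dx2 ^^ b) ((Dx1 ^^ a) f)
      \<in> deg_span {(Dx2 ^^ s) Y | s Y. s \<le> b \<and> Y \<in> {(Dx1 ^^ i) f | i. i < r1 \<and> i \<le> a}} (d * a + d * b)"
    by (rule Dx2.power_funpow_in_deg_span_iterates[OF p1(2), rotated]) simp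
  then have "bi_of_poly (p2 ^ (a + b)) * (bi_of_poly (p1 ^ (a + b)) * (Dx2 ^^ b) ((Dx1 ^^ a) f))
      \<in> deg_span (deriv_box f r1 r2) (d * a + d * b + d * (a + b))"
    by (rule deg_span_trans[rotated])
      (auto intro: power_mult_mixed_deriv_in_deg_span_box_if_Dx1_order_less finite_image_set2)
  moreover have "bi_of_poly ((p1 * p2) ^ (a + b)) * (Dx1 ^^ a) ((Dx2 ^^ b) f)
      = bi_of_poly (p2 ^ (a + b)) * (bi_of_poly (p1 ^ (a + b)) * (Dx2 ^^ b) ((Dx1 ^^ a) f))"
    by (simp add: funpow_Dx1_Dx2_commute power_mult_distrib bi_of_poly.hom_mult mult_ac)
  moreover have "d * a + d * b + d * (a + b) = 2 * d * (a + b)"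
    by (simp add: algebra_simps)
  ultimately show ?thesis
    by (simp only:)
qed

lemma power_mult_in_deg_span_box_if_mixed_derivs:
  assumes "n \<le> E" "Y \<in> mixed_derivs f n"
  shows "bi_of_poly ((p1 * p2) ^ E) * Y \<in> deg_span (deriv_box f r1 r2) (2 * d * E)"
proof -
  obtain a b where ab: "a + b \<le> n" "Y = (Dx1 ^^ a) ((Dx2 ^^ b) f)"
    using assms(2) unfolding mixed_derivs_def by blast
  have "tdeg ((p1 * p2) ^ (E - (a + b))) \<le> 2 * d * (E - (a + b))"
    using tdeg_power_le[OF tdeg_mult_le[OF p1(2) p2(2)]] by (simp add: mult_2)
  from deg_span_mult[OF power_mult_mixed_deriv_in_deg_span_box this]
  have "bi_of_poly ((p1 * p2) ^ (E - (a + b))) * (bi_of_poly ((p1 * p2) ^ (a + b)) * Y)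
      \<in> deg_span (deriv_box f r1 r2) (2 * d * (E - (a + b)) + 2 * d * (a + b))"
    unfolding ab(2) .
  moreover have "E - (a + b) + (a + b) = E"
    using ab(1) assms(1) by simp
  ultimately show ?thesis
    by (simp add: mult.assoc[symmetric] flip: bi_of_poly.hom_mult power_add add_mult_distrib2)
qed

lemma annihilator_of_apply_op12:
  assumes "bifps_derivation D pd" "\<And>n. D ` mixed_derivs f n \<subseteq> mixed_derivs f (Suc n)"
    and "\<forall>i j. tdeg (L i j) \<le> d_L"
  shows "\<exists>A. nonzero_op A \<and> ord_deg_bounded A (r1 * r2) (r1 * r2 * (d_L + 2 * d * (r_L + r1 * r2)))
           \<and> (\<Sum>k\<le>r1 * r2. bi_of_poly (A k) * (D ^^ k) (apply_op12 L r_L f)) = 0"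
proof (rule deg_span_linear_dependence[OF finite_deriv_box card_deriv_box])
  interpret bifps_derivation D pd by fact
  fix k assume "k \<le> r1 * r2"
  have "(D ^^ k) (apply_op12 L r_L f) \<in> deg_span (mixed_derivs f (r_L + k)) d_L"
    using apply_op12_in_deg_span[OF assms(3)] assms(2)
    by (intro funpow_in_deg_span[where B = "\<lambda>k. mixed_derivs f (r_L + k)"])
      (simp_all add: finite_mixed_derivs mixed_derivs_mono)
  moreover have "bi_of_poly ((p1 * p2) ^ (r_L + r1 * r2)) * Y
      \<in> deg_span (deriv_box f r1 r2) (2 * d * (r_L + r1 * r2))" if "Y \<in> mixed_derivs f (r_L + k)" for Y
    using \<open>k \<le> r1 * r2\<close> that by (intro power_mult_in_deg_span_box_if_mixed_derivs) simp_all
  ultimately show "bi_of_poly ((p1 * p2) ^ (r_L + r1 * r2)) * (D ^^ k) (apply_op12 L r_L f)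
      \<in> deg_span (deriv_box f r1 r2) (d_L + 2 * d * (r_L + r1 * r2))"
    by (rule deg_span_trans[OF finite_mixed_derivs])
qed (use p1(1) p2(1) in simp)

end

theorem lemma3p17:
  fixes f :: "'a::field_char_0 bifps"
    and L1 L2 :: "nat \<Rightarrow> 'a bipoly"
    and L :: "nat \<Rightarrow> nat \<Rightarrow> 'a bipoly"
    and r_f d_f r_L d_L :: nat
  assumes "nonzero_op L1" and "ord_deg_bounded L1 r_f d_f" and "apply_op1 L1 r_f f = 0"
    and "nonzero_op L2" and "ord_deg_bounded L2 r_f d_f" and "apply_op2 L2 r_f f = 0"
    and "\<forall>i j. r_L < i + j \<longrightarrow> L i j = 0"
    and "\<forall>i j. tdeg (L i j) \<le> d_L"
  shows "\<exists>A1 A2 r_g d_g.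
           r_g \<le> r_f ^ 2 \<and> d_g \<le> (d_L + 2 * d_f * (r_f ^ 2 + r_L)) * r_f ^ 2 \<and>
           nonzero_op A1 \<and> ord_deg_bounded A1 r_g d_g \<and>
           apply_op1 A1 r_g (apply_op12 L r_L f) = 0 \<and>
           nonzero_op A2 \<and> ord_deg_bounded A2 r_g d_g \<and>
           apply_op2 A2 r_g (apply_op12 L r_L f) = 0"
proof -
  let ?g = "apply_op12 L r_L f"
  obtain r1 where r1: "r1 \<le> r_f" "L1 r1 \<noteq> 0" "tdeg (L1 r1) \<le> d_f"
    "bi_of_poly (L1 r1) * (Dx1 ^^ r1) f \<in> deg_span {(Dx1 ^^ i) f | i. i < r1} d_f"
    using leading_relation_in_deg_span[OF assms(1,2)] assms(3) unfolding apply_op1_def by blast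
  obtain r2 where r2: "r2 \<le> r_f" "L2 r2 \<noteq> 0" "tdeg (L2 r2) \<le> d_f"
    "bi_of_poly (L2 r2) * (Dx2 ^^ r2) f \<in> deg_span {(Dx2 ^^ j) f | j. j < r2} d_f"
    using leading_relation_in_deg_span[OF assms(4,5)] assms(6) unfolding apply_op2_def by blast
  define m where "m = r1 * r2"
  define T where "T = d_L + 2 * d_f * (r_L + m)"
  obtain A1 where "nonzero_op A1" "ord_deg_bounded A1 m (m * T)" "apply_op1 A1 m ?g = 0"
    using annihilator_of_apply_op12[OF r1(2-4) r2(2-4) Dx1.bifps_derivation_axioms Dx1_mixed_derivs assms(8)]
    unfolding apply_op1_def m_def T_def by blast
  moreover obtain A2 where "nonzero_op A2" "ord_deg_bounded A2 m (m * T)" "apply_op2 A2 m ?g = 0"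
    using annihilator_of_apply_op12[OF r1(2-4) r2(2-4) Dx2.bifps_derivation_axioms Dx2_mixed_derivs assms(8)]
    unfolding apply_op2_def m_def T_def by blast
  moreover have "m \<le> r_f ^ 2"
    unfolding m_def power2_eq_square using r1(1) r2(1) by (rule mult_le_mono)
  moreover have "T \<le> d_L + 2 * d_f * (r_f ^ 2 + r_L)"
    unfolding T_def using \<open>m \<le> r_f ^ 2\<close> by (intro add_left_mono mult_left_mono) simp_all
  ultimately show ?thesis
    by (metis mult.commute mult_le_mono)
qed

end
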